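(* Identify distributions on $S\times S$ with matrices in $\mathbb{R}^{S\times S}$. Let $\Phi$ be the set of $S\times S$ permutation matrices, $I$ the identity matrix, and $\mathrm{co}\,\Phi$ the convex hull of $\Phi$. Then $\mathcal{M}(m)=\big(\mu_0-I+\mathrm{co}\,\Phi\big)\cap\mathbb{R}_+^{S\times S}$, where $\mu_0-I+\mathrm{co}\,\Phi=\{\mu_0-I+J:J\in\mathrm{co}\,\Phi\}$.
   Context: $S$ is a finite set and $m\in\Delta(S)$. $\mathcal{M}(m)$ is the set of probability distributions on $S\times S$ both of whose marginals equal $m$, and $\mu_0\in\mathcal{M}(m)$ is defined by $\mu_0(s,s)=m(s)$ and $\mu_0(s,t)=0$ for $s\neq t$. A permutation matrix is a square matrix with entries in $\{0,1\}$ having exactly one entry equal to $1$ in each row and each column. *)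

theory Defs
  imports "HOL-Analysis.Analysis"
begin

text \<open>The finite set S is represented by a finite type 's; matrices in R^(S x S)
  are elements of real^'s^'s, with entry (s,t) given by A$s$t.\<close>

definition prob_dist :: "real^'s::finite \<Rightarrow> bool" where
  "prob_dist m \<longleftrightarrow> (\<forall>s. 0 \<le> m$s) \<and> (\<Sum>s\<in>UNIV. m$s) = 1"

definition couplings :: "real^'s::finite \<Rightarrow> (real^'s^'s) set" where
  "couplings m = {\<mu>. (\<forall>s t. 0 \<le> \<mu>$s$t) \<and> (\<Sum>s\<in>UNIV. \<Sum>t\<in>UNIV. \<mu>$s$t) = 1
       \<and> (\<forall>s. (\<Sum>t\<in>UNIV. \<mu>$s$t) = m$s) \<and> (\<forall>t. (\<Sum>s\<in>UNIV. \<mu>$s$t) = m$t)}"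

definition mu0 :: "real^'s::finite \<Rightarrow> real^'s^'s" where
  "mu0 m = (\<chi> s t. if s = t then m$s else 0)"

definition perm_matrix :: "real^'s::finite^'s \<Rightarrow> bool" where
  "perm_matrix A \<longleftrightarrow> (\<forall>s t. A$s$t \<in> {0,1})
     \<and> (\<forall>s. \<exists>!t. A$s$t = 1) \<and> (\<forall>t. \<exists>!s. A$s$t = 1)"

end

theory Submission
  imports Defs
begin

text \<open>Subtracting \<open>\<mu>\<^sub>0\<close> and adding \<open>I\<close> turns the condition that both marginals of \<open>\<mu>\<close>
  equal \<open>m\<close> into the condition that all row and column sums equal 1; as every \<open>m s \<le> 1\<close>,
  nonnegativity of \<open>\<mu>\<close> makes \<open>\<mu> - \<mu>\<^sub>0 + I\<close> nonnegative as well. So the theorem is Birkhoff's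
  theorem that the doubly stochastic matrices are the convex hull of the permutation matrices,
  which follows from Krein--Milman once every extreme point is shown to be a 0/1 matrix. If an
  extreme point \<open>D\<close> had a nonempty set \<open>F\<close> of fractional entries, every row and column meeting
  \<open>F\<close> would meet it at least twice, so \<open>|F|\<close> is at least the number of rows plus columns meeting
  \<open>F\<close>. The row and column sums of matrices supported on \<open>F\<close> span a space of smaller dimension,
  so some nonzero \<open>E\<close> supported on \<open>F\<close> has zero row and column sums, and \<open>D\<close> is the midpoint of
  the doubly stochastic matrices \<open>D \<plusminus> \<epsilon> E\<close>.\<close>

lemma mem_translation_image_iff:
  fixes a :: "'a::ab_group_add"
  shows "x \<in> {a + y | y. y \<in> S} \<longleftrightarrow> x - a \<in> S"
proof
  assume "x \<in> {a + y | y. y \<in> S}"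
  then obtain y where "y \<in> S" "x = a + y"
    by blast
  then show "x - a \<in> S"
    by simp
next
  assume "x - a \<in> S"
  moreover have "x = a + (x - a)"
    by simp
  ultimately show "x \<in> {a + y | y. y \<in> S}"
    by blast
qed

lemma sum_zero_one_eq_card:
  fixes f :: "'a \<Rightarrow> real"
  assumes "finite A" and "\<And>x. x \<in> A \<Longrightarrow> f x = 0 \<or> f x = 1"
  shows "sum f A = real (card {x\<in>A. f x = 1})"
proof -
  have "sum f A = (\<Sum>x\<in>A. if f x = 1 then 1 else 0)"
    using assms by (intro sum.cong) auto
  also have "\<dots> = real (card {x\<in>A. f x = 1})"
    using assms(1) by (simp add: sum.If_cases Int_def conj_commute)
  finally show ?thesis .
qed

lemma sum_zero_one_eq_1_iff:
  fixes f :: "'a::finite \<Rightarrow> real"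
  assumes "\<And>x. f x = 0 \<or> f x = 1"
  shows "sum f UNIV = 1 \<longleftrightarrow> (\<exists>!x. f x = 1)"
proof -
  have "sum f UNIV = real (card {x. f x = 1})"
    using sum_zero_one_eq_card[of UNIV f] assms by simp
  also have "\<dots> = 1 \<longleftrightarrow> (\<exists>x. {x. f x = 1} = {x})"
    by (simp add: card_1_singleton_iff)
  also have "\<dots> \<longleftrightarrow> (\<exists>!x. f x = 1)"
    by (auto simp: set_eq_iff)
  finally show ?thesis .
qed

lemma fractional_entry_not_unique:
  fixes f :: "'a::finite \<Rightarrow> real"
  assumes nonneg: "\<And>x. 0 \<le> f x" and sum_1: "sum f UNIV = 1" and frac: "0 < f t" "f t < 1"
  shows "\<exists>t'. t' \<noteq> t \<and> 0 < f t' \<and> f t' < 1"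
proof (rule ccontr)
  assume no_other: "\<not> ?thesis"
  have le_1: "f x \<le> 1" for x
    using member_le_sum[of x UNIV f] nonneg sum_1 by auto
  have "f x = 0 \<or> f x = 1" if "x \<in> UNIV - {t}" for x
  proof -
    have "\<not> (0 < f x \<and> f x < 1)" "f x \<le> 1" "0 \<le> f x"
      using that no_other le_1 nonneg by auto
    then show ?thesis by linarith
  qed
  then have "sum f (UNIV - {t}) = real (card {x\<in>UNIV - {t}. f x = 1})"
    by (intro sum_zero_one_eq_card) auto
  moreover have "sum f (UNIV - {t}) = 1 - f t"
    using sum_1 by (simp add: sum_diff1)
  ultimately have "real (card {x\<in>UNIV - {t}. f x = 1}) \<in> {0<..<1}"
    unfolding greaterThanLessThan_iff using frac by linarith
  moreover have "real n \<notin> {0<..<1}" for n :: nat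
    by (cases n) auto
  ultimately show False
    by blast
qed

lemma double_card_fst_image_le:
  assumes "finite F" and "\<And>x. x \<in> fst ` F \<Longrightarrow> 2 \<le> card {y. (x, y) \<in> F}"
  shows "2 * card (fst ` F) \<le> card F"
proof -
  have "F = Sigma (fst ` F) (\<lambda>x. {y. (x, y) \<in> F})"
    by force
  moreover have "finite {y. (x, y) \<in> F}" for x
    using finite_imageI[OF assms(1), of snd] by (rule finite_subset[rotated]) force
  ultimately have "card F = (\<Sum>x\<in>fst ` F. card {y. (x, y) \<in> F})"
    using assms(1) card_SigmaI[of "fst ` F" "\<lambda>x. {y. (x, y) \<in> F}"] by simp
  also have "\<dots> \<ge> card (fst ` F) * 2"
    using sum_bounded_below[of "fst ` F" "2::nat" "\<lambda>x. card {y. (x, y) \<in> F}"] assms(2) by simp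
  finally show ?thesis by simp
qed

definition margins :: "real^'n::finite^'n \<Rightarrow> (real^'n) \<times> (real^'n)" where
  "margins M = ((\<chi> s. \<Sum>t\<in>UNIV. M$s$t), (\<chi> t. \<Sum>s\<in>UNIV. M$s$t))"

lemma linear_margins: "linear margins"
  by (rule linearI) (auto simp: margins_def vec_eq_iff sum.distrib sum_distrib_left)

lemma margins_eq_iff:
  "margins M = (r, c) \<longleftrightarrow> (\<forall>s. (\<Sum>t\<in>UNIV. M$s$t) = r$s) \<and> (\<forall>t. (\<Sum>s\<in>UNIV. M$s$t) = c$t)"
  by (auto simp: margins_def vec_eq_iff)

lemma margins_transpose: "margins (transpose M) = prod.swap (margins M)"
  by (simp add: margins_def transpose_def)

lemma axis_axis_nth: "axis s (axis t c) $ i $ j = (if i = s \<and> j = t then c else 0)"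
  by (simp add: axis_def)

lemma margins_axis_axis:
  fixes s t :: "'n::finite"
  shows "margins (axis s (axis t 1)) = (axis s 1, axis t 1)"
proof -
  have "(\<Sum>j\<in>UNIV. axis s (axis t 1) $ i $ j) = (axis s 1 :: real^'n) $ i" for i
    unfolding axis_axis_nth by (cases "i = s") (simp_all add: axis_def)
  moreover have "(\<Sum>i\<in>UNIV. axis s (axis t 1) $ i $ j) = (axis t 1 :: real^'n) $ j" for j
    unfolding axis_axis_nth by (cases "j = t") (simp_all add: axis_def)
  ultimately show ?thesis by (simp add: margins_def vec_eq_iff)
qed

lemma margins_mat_1: "margins (mat 1 :: real^'n::finite^'n) = (1, 1)"
  by (simp add: margins_def vec_eq_iff mat_def sum.delta sum.delta')

lemma margins_mu0: "margins (mu0 m) = (m, m)"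
  by (simp add: margins_def vec_eq_iff mu0_def sum.delta sum.delta')

lemma exists_zero_margins_matrix_supported_on:
  fixes F :: "('n::finite \<times> 'n) set"
  assumes "F \<noteq> {}" and "card (fst ` F) + card (snd ` F) \<le> card F"
  shows "\<exists>E::real^'n^'n. E \<noteq> 0 \<and> margins E = 0 \<and> (\<forall>s t. (s, t) \<notin> F \<longrightarrow> E$s$t = 0)"
proof -
  define X where "X = (\<lambda>(s, t). axis s (axis t 1) :: real^'n^'n) ` F"
  have independent_X: "independent X"
    by (rule independent_mono[OF independent_Basis]) (auto simp: X_def)
  have card_X: "card X = card F"
    unfolding X_def by (intro card_image) (auto simp: inj_on_def axis_eq_axis)
  obtain t0 where t0: "t0 \<in> snd ` F"
    using assms(1) by auto
  txt \<open>The margins \<open>(e\<^sub>s, e\<^sub>t) = (e\<^sub>s, e\<^sub>t\<^sub>0) + (0, e\<^sub>t - e\<^sub>t\<^sub>0)\<close> of the matrix units at \<open>F\<close>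
    lie in the span of fewer than \<open>|F|\<close> vectors.\<close>
  define B :: "((real^'n) \<times> (real^'n)) set"
    where "B = (\<lambda>s. (axis s 1, axis t0 1)) ` fst ` F \<union> (\<lambda>t. (0, axis t 1 - axis t0 1)) ` (snd ` F - {t0})"
  have "card B \<le> card (fst ` F) + card (snd ` F - {t0})"
    unfolding B_def by (rule card_Un_le[THEN order_trans]) (intro add_mono card_image_le; simp)
  also have "\<dots> < card F"
    using assms t0 card_gt_0_iff[of "snd ` F"] by (simp add: card_Diff_singleton)
  finally have card_B: "card B < card X"
    using card_X by simp
  have "margins ` X \<subseteq> span B"
  proof
    fix y
    assume "y \<in> margins ` X"
    then obtain s t where st: "(s, t) \<in> F" and y: "y = (axis s 1, axis t0 1) + (0, axis t 1 - axis t0 1)"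
      by (auto simp: X_def margins_axis_axis)
    have "(axis s 1, axis t0 1) \<in> span B"
      using st by (intro span_base) (force simp: B_def)
    moreover have "(0, axis t 1 - axis t0 1) \<in> span B"
    proof (cases "t = t0")
      case False
      with st show ?thesis by (intro span_base) (force simp: B_def)
    qed (simp add: span_zero flip: zero_prod_def)
    ultimately show "y \<in> span B"
      unfolding y by (rule span_add)
  qed
  then have "\<not> inj_on margins (span X)"
    using card_B independent_span_bound[of B "margins ` X"]
      linear_independent_injective_image[OF linear_margins independent_X]
      card_image[OF inj_on_subset[OF _ span_superset]] by (force simp: B_def)
  then obtain E where E: "E \<in> span X" "E \<noteq> 0" "margins E = 0"
    using linear_inj_on_iff_eq_0[OF linear_margins subspace_span] by blast
  have "span X \<subseteq> {M. \<forall>s t. (s, t) \<notin> F \<longrightarrow> M$s$t = 0}"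
    by (rule span_minimal) (auto simp: X_def axis_def subspace_def)
  with E show ?thesis by blast
qed

definition doubly_stochastic :: "(real^'n::finite^'n) set" where
  "doubly_stochastic = {D. (\<forall>s t. 0 \<le> D$s$t) \<and> margins D = (1, 1)}"

lemma convex_doubly_stochastic: "convex doubly_stochastic"
proof -
  have "doubly_stochastic = {D. \<forall>s t. 0 \<le> D$s$t} \<inter> margins -` {(1, 1)}"
    by (auto simp: doubly_stochastic_def)
  moreover have "convex {D :: real^'n^'n. \<forall>s t. 0 \<le> D$s$t}"
    by (auto simp: convex_def)
  ultimately show ?thesis
    using convex_Int convex_linear_vimage[OF linear_margins convex_singleton] by metis
qed

lemma compact_doubly_stochastic: "compact (doubly_stochastic :: (real^'n::finite^'n) set)"
proof -
  have "norm D \<le> real CARD('n)" if "D \<in> doubly_stochastic" for D :: "real^'n^'n"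
  proof -
    have "norm D \<le> (\<Sum>s\<in>UNIV. norm (D$s))"
      unfolding norm_vec_def by (rule L2_set_le_sum) simp
    also have "\<dots> \<le> (\<Sum>s\<in>UNIV. \<Sum>t\<in>UNIV. \<bar>D$s$t\<bar>)"
      by (intro sum_mono norm_le_l1_cart)
    also have "\<dots> = (\<Sum>s\<in>(UNIV::'n set). 1)"
      using that by (simp add: doubly_stochastic_def margins_eq_iff)
    finally show ?thesis by simp
  qed
  then have "bounded (doubly_stochastic :: (real^'n^'n) set)"
    unfolding bounded_iff by blast
  moreover have "closed (doubly_stochastic :: (real^'n^'n) set)"
  proof -
    have "doubly_stochastic = (\<Inter>s t. {D::real^'n^'n. 0 \<le> D$s$t}) \<inter> margins -` {(1, 1)}"
      by (auto simp: doubly_stochastic_def)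
    also have "closed \<dots>"
      using linear_margins
      by (intro closed_Int closed_INT closed_vimage closed_Collect_le continuous_intros ballI)
        (auto intro: linear_continuous_on simp: linear_conv_bounded_linear)
    finally show ?thesis .
  qed
  ultimately show ?thesis
    by (simp add: compact_eq_bounded_closed)
qed

lemma doubly_stochastic_entry_le_1:
  assumes "D \<in> doubly_stochastic"
  shows "D$s$t \<le> 1"
proof -
  have "D$s$t \<le> (\<Sum>t\<in>UNIV. D$s$t)"
    using assms by (intro member_le_sum) (auto simp: doubly_stochastic_def)
  also have "\<dots> = 1"
    using assms by (auto simp: doubly_stochastic_def margins_eq_iff)
  finally show ?thesis .
qed

lemma transpose_doubly_stochastic:
  assumes "D \<in> doubly_stochastic"
  shows "transpose D \<in> doubly_stochastic"
  using assms by (simp add: doubly_stochastic_def margins_transpose) (simp add: transpose_def)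

lemma perm_matrix_doubly_stochastic:
  assumes "perm_matrix A"
  shows "A \<in> doubly_stochastic"
proof -
  have zero_one: "A$s$t = 0 \<or> A$s$t = 1" for s t
    using assms by (auto simp: perm_matrix_def)
  then have "(\<Sum>t\<in>UNIV. A$s$t) = 1" "(\<Sum>s\<in>UNIV. A$s$t) = 1" for s t
    using assms by (simp_all add: sum_zero_one_eq_1_iff perm_matrix_def)
  moreover have "0 \<le> A$s$t" for s t
    using zero_one[of s t] by auto
  ultimately show ?thesis
    by (simp add: doubly_stochastic_def margins_eq_iff)
qed

definition fractional_entries :: "real^'n::finite^'n \<Rightarrow> ('n \<times> 'n) set" where
  "fractional_entries D = {(s, t). 0 < D$s$t \<and> D$s$t < 1}"

lemma fractional_entries_transpose:
  "fractional_entries (transpose D) = prod.swap ` fractional_entries D"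
  by (force simp: fractional_entries_def transpose_def)

lemma double_card_rows_fractional_entries_le:
  assumes "D \<in> doubly_stochastic"
  shows "2 * card (fst ` fractional_entries D) \<le> card (fractional_entries D)"
proof (rule double_card_fst_image_le)
  fix s
  assume "s \<in> fst ` fractional_entries D"
  then obtain t where t: "0 < D$s$t" "D$s$t < 1"
    by (auto simp: fractional_entries_def)
  moreover have "\<And>t. 0 \<le> D$s$t" "(\<Sum>t\<in>UNIV. D$s$t) = 1"
    using assms by (auto simp: doubly_stochastic_def margins_eq_iff)
  ultimately obtain t' where "t' \<noteq> t" "0 < D$s$t'" "D$s$t' < 1"
    using fractional_entry_not_unique[of "\<lambda>t. D$s$t" t] by blast
  with t have "card {t, t'} \<le> card {t. (s, t) \<in> fractional_entries D}"
    by (intro card_mono) (auto simp: fractional_entries_def)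
  with \<open>t' \<noteq> t\<close> show "2 \<le> card {t. (s, t) \<in> fractional_entries D}"
    by simp
qed simp

lemma not_extreme_point_doubly_stochastic:
  assumes D: "D \<in> doubly_stochastic" and "E \<noteq> 0" and "margins E = 0"
    and support: "\<And>s t. E$s$t \<noteq> 0 \<Longrightarrow> 0 < D$s$t"
  shows "\<not> D extreme_point_of doubly_stochastic"
proof -
  have "\<forall>\<^sub>F e in at_right 0. \<forall>s t. e * \<bar>E$s$t\<bar> \<le> D$s$t"
  proof (intro eventually_all_finite)
    fix s t
    show "\<forall>\<^sub>F e in at_right 0. e * \<bar>E$s$t\<bar> \<le> D$s$t"
    proof (cases "E$s$t = 0")
      case True
      then show ?thesis using D by (simp add: doubly_stochastic_def)
    next
      case False
      have "((\<lambda>e. e * \<bar>E$s$t\<bar>) \<longlongrightarrow> 0) (at_right 0)"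
        by (intro tendsto_mult_left_zero tendsto_ident_at)
      then show ?thesis
        using support[OF False] by (rule order_tendstoD(2)[THEN eventually_mono]) simp
    qed
  qed
  with eventually_at_right_less have "\<forall>\<^sub>F e in at_right 0. 0 < e \<and> (\<forall>s t. e * \<bar>E$s$t\<bar> \<le> D$s$t)"
    by (rule eventually_conj)
  moreover have "at_right (0::real) \<noteq> bot"
    using trivial_limit_at_right_real unfolding trivial_limit_def .
  ultimately obtain e where "0 < e" and e: "\<And>s t. e * \<bar>E$s$t\<bar> \<le> D$s$t"
    using eventually_happens' by blast
  have "D + e *\<^sub>R E \<in> doubly_stochastic" "D - e *\<^sub>R E \<in> doubly_stochastic"
  proof -
    have "0 \<le> D$s$t + e * E$s$t" "0 \<le> D$s$t - e * E$s$t" for s t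
      using e[of s t] \<open>0 < e\<close> abs_le_iff[of "e * E$s$t"] by (simp_all add: abs_mult)
    moreover have "margins (D + e *\<^sub>R E) = (1, 1)" "margins (D - e *\<^sub>R E) = (1, 1)"
      using D \<open>margins E = 0\<close>
      by (simp_all add: linear_add[OF linear_margins] linear_diff[OF linear_margins]
          linear_scale[OF linear_margins] doubly_stochastic_def)
    ultimately show "D + e *\<^sub>R E \<in> doubly_stochastic" "D - e *\<^sub>R E \<in> doubly_stochastic"
      by (simp_all add: doubly_stochastic_def)
  qed
  moreover have "D - e *\<^sub>R E \<noteq> D + e *\<^sub>R E"
    using \<open>E \<noteq> 0\<close> \<open>0 < e\<close> by (auto simp: vec_eq_iff)
  moreover have "midpoint (D - e *\<^sub>R E) (D + e *\<^sub>R E) = D"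
    by (simp add: midpoint_def vec_eq_iff)
  ultimately show ?thesis
    by (metis extreme_point_of_def midpoint_in_open_segment)
qed

lemma extreme_point_doubly_stochastic_no_fractional_entries:
  fixes D :: "real^'n::finite^'n"
  assumes extreme: "D extreme_point_of doubly_stochastic"
  shows "fractional_entries D = {}"
proof (rule ccontr)
  assume nonempty: "fractional_entries D \<noteq> {}"
  let ?F = "fractional_entries D"
  have D: "D \<in> doubly_stochastic"
    using extreme by (simp add: extreme_point_of_def)
  have "2 * card (fst ` ?F) \<le> card ?F"
    using D by (rule double_card_rows_fractional_entries_le)
  moreover have "2 * card (snd ` ?F) \<le> card ?F"
    using double_card_rows_fractional_entries_le[OF transpose_doubly_stochastic[OF D]]
    by (simp add: fractional_entries_transpose image_image card_image)
  ultimately obtain E :: "real^'n^'n" where "E \<noteq> 0" "margins E = 0"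
      and "\<And>s t. (s, t) \<notin> ?F \<Longrightarrow> E$s$t = 0"
    using exists_zero_margins_matrix_supported_on[OF nonempty] by fastforce
  then have "\<not> D extreme_point_of doubly_stochastic"
    by (intro not_extreme_point_doubly_stochastic[OF D]) (auto simp: fractional_entries_def)
  with extreme show False by contradiction
qed

lemma extreme_point_doubly_stochastic_perm_matrix:
  assumes extreme: "D extreme_point_of doubly_stochastic"
  shows "perm_matrix D"
proof -
  have D: "D \<in> doubly_stochastic"
    using extreme by (simp add: extreme_point_of_def)
  have zero_one: "D$s$t = 0 \<or> D$s$t = 1" for s t
  proof -
    have "(s, t) \<notin> fractional_entries D"
      using extreme_point_doubly_stochastic_no_fractional_entries[OF extreme] by simp
    moreover have "0 \<le> D$s$t"
      using D by (simp add: doubly_stochastic_def)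
    ultimately show ?thesis
      using doubly_stochastic_entry_le_1[OF D, of s t] by (auto simp: fractional_entries_def)
  qed
  moreover have "(\<Sum>t\<in>UNIV. D$s$t) = 1" "(\<Sum>s\<in>UNIV. D$s$t) = 1" for s t
    using D by (simp_all add: doubly_stochastic_def margins_eq_iff)
  ultimately show ?thesis
    by (simp add: perm_matrix_def sum_zero_one_eq_1_iff[symmetric])
qed

theorem doubly_stochastic_eq_convex_hull_perm_matrices:
  "doubly_stochastic = convex hull {A :: real^'n::finite^'n. perm_matrix A}"
proof
  show "convex hull {A. perm_matrix A} \<subseteq> doubly_stochastic"
    by (intro hull_minimal convex_doubly_stochastic) (auto intro: perm_matrix_doubly_stochastic)
  have "doubly_stochastic = convex hull {D :: real^'n^'n. D extreme_point_of doubly_stochastic}"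
    by (rule Krein_Milman_Minkowski[OF compact_doubly_stochastic convex_doubly_stochastic])
  also have "\<dots> \<subseteq> convex hull {A. perm_matrix A}"
    by (intro hull_mono) (auto intro: extreme_point_doubly_stochastic_perm_matrix)
  finally show "doubly_stochastic \<subseteq> convex hull {A :: real^'n^'n. perm_matrix A}" .
qed

lemma mem_couplings_iff_shift_doubly_stochastic:
  assumes "prob_dist m"
  shows "\<mu> \<in> couplings m \<longleftrightarrow> (\<forall>s t. 0 \<le> \<mu>$s$t) \<and> \<mu> - mu0 m + mat 1 \<in> doubly_stochastic"
proof -
  have m_nonneg: "0 \<le> m$s" and m_sum: "(\<Sum>s\<in>UNIV. m$s) = 1" for s
    using assms by (auto simp: prob_dist_def)
  have m_le_1: "m$s \<le> 1" for s
    using member_le_sum[of s UNIV "\<lambda>s. m$s"] m_nonneg m_sum by auto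
  have shift_nonneg: "0 \<le> (\<mu> - mu0 m + mat 1)$s$t" if "\<forall>s t. 0 \<le> \<mu>$s$t" for s t
    using that[rule_format, of s t] m_le_1[of s] by (auto simp: mu0_def mat_def)
  have margins_shift: "margins (\<mu> - mu0 m + mat 1) = margins \<mu> - (m, m) + (1, 1)"
    by (simp add: linear_add[OF linear_margins] linear_diff[OF linear_margins] margins_mu0 margins_mat_1)
  have total: "(\<Sum>s\<in>UNIV. \<Sum>t\<in>UNIV. \<mu>$s$t) = 1" if "margins \<mu> = (m, m)"
    using that m_sum by (simp add: margins_eq_iff)
  show ?thesis
    using shift_nonneg total
    by (auto simp: couplings_def doubly_stochastic_def margins_shift margins_eq_iff[symmetric])
qed

theorem lemma5:
  fixes m :: "real^'s::finite"
  assumes "prob_dist m"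
  shows "couplings m =
    {mu0 m - mat 1 + J | J. J \<in> convex hull {A. perm_matrix A}}
    \<inter> {\<mu>. \<forall>s t. 0 \<le> \<mu>$s$t}"
proof -
  have "\<mu> \<in> {mu0 m - mat 1 + J | J. J \<in> convex hull {A. perm_matrix A}}
      \<longleftrightarrow> \<mu> - mu0 m + mat 1 \<in> doubly_stochastic" for \<mu>
    unfolding mem_translation_image_iff doubly_stochastic_eq_convex_hull_perm_matrices
    by (simp add: algebra_simps)
  then show ?thesis
    using mem_couplings_iff_shift_doubly_stochastic[OF assms] by blast
qed

end
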